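(* Fix $\theta=(A,D,\omega)\in(\epsilon,1-\epsilon)^{2p+1}$, $\gamma\in\Gamma$, $k\in\{0,1\}^p$ with $p_k=\sum_jk_j\ge1$, and an ordering $(K_1,\dots,K_{p_k})$ of $\{j:k_j=1\}$. Let $\gamma(0)=\gamma,\gamma(1),\dots,\gamma(p_k)=\gamma'$ be a path of the forward PARNI proposal, i.e. for each $r$, $\gamma(r)\in\{\gamma(r-1),\gamma(r-1)^{(K_r)}\}$. Define the forward proposal probability $q(\gamma,\gamma')=\prod_{r=1}^{p_k}s_{K_r}(\gamma(r-1),\gamma(r))$ and the reverse proposal probability $q'(\gamma',\gamma)=\prod_{r=1}^{p_k}s_{K_{p_k-r+1}}(\gamma(p_k-r+1),\gamma(p_k-r))$ (the reverse move uses the reversed ordering and traverses the same path backwards). Let $Z(r)=Z_{K_r}(\gamma(r-1))$ and $Z'(r)=Z_{K_{p_k-r+1}}(\gamma(p_k-r+1))$. Then $$\frac{\pi(\gamma')\,p^{\mathrm{RN}}_\eta(k\mid\gamma')\,q'(\gamma',\gamma)}{\pi(\gamma)\,p^{\mathrm{RN}}_\eta(k\mid\gamma)\,q(\gamma,\gamma')}=\prod_{r=1}^{p_k}\frac{Z(r)}{Z'(r)},$$ so that the PARNI Metropolis–Hastings acceptance probability equals $\min\{1,\prod_{r=1}^{p_k}Z(r)/Z'(r)\}$.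
   Context: $\Gamma=\{0,1\}^p$; $\pi$ is an everywhere positive probability mass function on $\Gamma$. $g:(0,\infty)\to(0,\infty)$ is continuous and a balancing function: $g(t)=t\,g(1/t)$ for all $t>0$. $\epsilon\in(0,1/2)$, $\eta=(A,D)$. $p^{\mathrm{RN}}_\eta(k\mid\gamma)=\prod_jp_j(k_j\mid\gamma_j)$ with $p_j(1\mid0)=A_j$, $p_j(0\mid0)=1-A_j$, $p_j(1\mid1)=D_j$, $p_j(0\mid1)=1-D_j$. For $x\in\Gamma$ and a coordinate $j$, $x^{(j)}$ denotes $x$ with coordinate $j$ flipped. Define $t_j(x)=\frac{\pi(x^{(j)})\,p_j(1\mid x^{(j)}_j)}{\pi(x)\,p_j(1\mid x_j)}$ (equivalently $\frac{\pi(x^{(j)})p^{\mathrm{RN}}_\eta(e(j)\mid x^{(j)})}{\pi(x)p^{\mathrm{RN}}_\eta(e(j)\mid x)}$ with $e(j)$ the $j$-th standard basis vector), $Z_j(x)=(1-\omega)g(1)+\omega\,g(t_j(x))$, and the one-coordinate step probabilities $s_j(x,x^{(j)})=\omega g(t_j(x))/Z_j(x)$, $s_j(x,x)=(1-\omega)g(1)/Z_j(x)$ (zero for other targets). PARNI proposal: from $\gamma$, draw $k\sim p^{\mathrm{RN}}_\eta(\cdot\mid\gamma)$, order $\{j:k_j=1\}$ as $(K_1,\dots,K_{p_k})$, set $\gamma(0)=\gamma$ and successively draw $\gamma(r)\sim s_{K_r}(\gamma(r-1),\cdot)$; the proposal is $\gamma'=\gamma(p_k)$. *)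

theory Defs
  imports Complex_Main
begin

text \<open>States of \<Gamma> = {0,1}^p are functions 'n \<Rightarrow> bool for a finite index type 'n
  with p = CARD('n).\<close>

definition flip :: "('n \<Rightarrow> bool) \<Rightarrow> 'n \<Rightarrow> ('n \<Rightarrow> bool)" where
  "flip x j = x(j := \<not> x j)"

text \<open>p_j(c | b): probability that k_j = c given gamma_j = b.\<close>
definition pj :: "('n \<Rightarrow> real) \<Rightarrow> ('n \<Rightarrow> real) \<Rightarrow> 'n \<Rightarrow> bool \<Rightarrow> bool \<Rightarrow> real" where
  "pj A D j b c = (if b then (if c then D j else 1 - D j) else (if c then A j else 1 - A j))"

definition pRN :: "('n::finite \<Rightarrow> real) \<Rightarrow> ('n \<Rightarrow> real) \<Rightarrow> ('n \<Rightarrow> bool) \<Rightarrow> ('n \<Rightarrow> bool) \<Rightarrow> real" where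
  "pRN A D k \<gamma> = (\<Prod>j\<in>UNIV. pj A D j (\<gamma> j) (k j))"

definition tj :: "(('n \<Rightarrow> bool) \<Rightarrow> real) \<Rightarrow> ('n \<Rightarrow> real) \<Rightarrow> ('n \<Rightarrow> real) \<Rightarrow> 'n \<Rightarrow> ('n \<Rightarrow> bool) \<Rightarrow> real" where
  "tj \<pi> A D j x = (\<pi> (flip x j) * pj A D j (flip x j j) True) / (\<pi> x * pj A D j (x j) True)"

definition Zj :: "(real \<Rightarrow> real) \<Rightarrow> real \<Rightarrow> (('n \<Rightarrow> bool) \<Rightarrow> real) \<Rightarrow> ('n \<Rightarrow> real) \<Rightarrow> ('n \<Rightarrow> real)
    \<Rightarrow> 'n \<Rightarrow> ('n \<Rightarrow> bool) \<Rightarrow> real" where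
  "Zj g \<omega> \<pi> A D j x = (1 - \<omega>) * g 1 + \<omega> * g (tj \<pi> A D j x)"

definition sj :: "(real \<Rightarrow> real) \<Rightarrow> real \<Rightarrow> (('n \<Rightarrow> bool) \<Rightarrow> real) \<Rightarrow> ('n \<Rightarrow> real) \<Rightarrow> ('n \<Rightarrow> real)
    \<Rightarrow> 'n \<Rightarrow> ('n \<Rightarrow> bool) \<Rightarrow> ('n \<Rightarrow> bool) \<Rightarrow> real" where
  "sj g \<omega> \<pi> A D j x y =
     (if y = flip x j then \<omega> * g (tj \<pi> A D j x) / Zj g \<omega> \<pi> A D j x
      else if y = x then (1 - \<omega>) * g 1 / Zj g \<omega> \<pi> A D j x
      else 0)"

end

theory Submission
  imports Defs
begin

text \<open>Each single-coordinate kernel s_j satisfies detailed balance up to its normaliser: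
  if k_j = 1 and y is x or x with coordinate j flipped, then
  \<pi>(y) p(k|y) s_j(y,x) Z_j(y) = \<pi>(x) p(k|x) s_j(x,y) Z_j(x).
  For a flip this is \<pi>(y) p(k|y) = t_j(x) \<pi>(x) p(k|x) together with the balancing identity
  t g(1/t) = g(t), as t_j(y) = 1/t_j(x). Multiplying these identities along the path,
  everything but the normalisers telescopes, which gives the ratio of the products of Z.\<close>

lemma flip_neq: "flip x j \<noteq> x"
  unfolding flip_def by (metis fun_upd_same)

lemma flip_flip [simp]: "flip (flip x j) j = x"
  unfolding flip_def by auto

lemma tj_flip: "tj \<pi> A D j (flip x j) = 1 / tj \<pi> A D j x"
  unfolding tj_def by simp

lemma pRN_flip:
  fixes x :: "'n::finite \<Rightarrow> bool"
  assumes "k j"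
  shows "pRN A D k (flip x j) * pj A D j (x j) True = pRN A D k x * pj A D j (flip x j j) True"
proof -
  have "(\<Prod>i\<in>UNIV-{j}. pj A D i (flip x j i) (k i)) = (\<Prod>i\<in>UNIV-{j}. pj A D i (x i) (k i))"
    by (rule prod.cong) (auto simp: flip_def)
  then show ?thesis
    unfolding pRN_def using assms by (simp add: prod.remove[of UNIV j])
qed

lemma prod_telescope:
  fixes w :: "nat \<Rightarrow> 'a::comm_monoid_mult"
  assumes "\<And>r. 1 \<le> r \<Longrightarrow> r \<le> n \<Longrightarrow> w r * b r = w (r - 1) * a r"
  shows "w n * prod b {1..n} = w 0 * prod a {1..n}"
  using assms
proof (induction n)
  case 0
  then show ?case by simp
next
  case (Suc n)
  have "w (Suc n) * prod b {1..Suc n} = (w (Suc n) * b (Suc n)) * prod b {1..n}"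
    by (simp add: ac_simps)
  also have "\<dots> = (w n * prod b {1..n}) * a (Suc n)"
    using Suc.prems[of "Suc n"] by (simp add: ac_simps)
  also have "\<dots> = w 0 * prod a {1..Suc n}"
    using Suc by (simp add: ac_simps)
  finally show ?case .
qed

lemma prod_atLeastAtMost_reverse:
  fixes f :: "nat \<Rightarrow> 'a::comm_monoid_mult"
  shows "(\<Prod>r=1..n. f (n - r + 1)) = (\<Prod>r=1..n. f r)"
proof -
  have "(\<Prod>r=1..n. f r) = (\<Prod>r=1..n. f (n + 1 - r))"
    by (rule prod.atLeastAtMost_rev[of f 1 n])
  also have "\<dots> = (\<Prod>r=1..n. f (n - r + 1))"
    by (rule prod.cong) (auto simp: Suc_diff_le)
  finally show ?thesis by simp
qed

locale parni_kernel =
  fixes \<pi> :: "('n::finite \<Rightarrow> bool) \<Rightarrow> real"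
    and g :: "real \<Rightarrow> real"
    and \<omega> :: real
    and A D :: "'n \<Rightarrow> real"
  assumes pi_pos: "\<And>x. \<pi> x > 0"
    and g_pos: "\<And>t. t > 0 \<Longrightarrow> g t > 0"
    and g_balancing: "\<And>t. t > 0 \<Longrightarrow> g t = t * g (1 / t)"
    and A_range: "\<And>j. 0 < A j \<and> A j < 1"
    and D_range: "\<And>j. 0 < D j \<and> D j < 1"
    and omega_range: "0 < \<omega>" "\<omega> < 1"
begin

lemma pj_pos: "pj A D j b c > 0"
  using A_range[of j] D_range[of j] unfolding pj_def by auto

lemma pRN_pos: "pRN A D k x > 0"
  unfolding pRN_def by (rule prod_pos) (simp add: pj_pos)

lemma tj_pos: "tj \<pi> A D j x > 0"
  unfolding tj_def using pi_pos pj_pos by simp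

lemma Zj_pos: "Zj g \<omega> \<pi> A D j x > 0"
  unfolding Zj_def using g_pos[OF tj_pos] g_pos[of 1] omega_range by (simp add: add_pos_pos)

lemma sj_pos:
  assumes "y = x \<or> y = flip x j"
  shows "sj g \<omega> \<pi> A D j x y > 0"
  using assms Zj_pos g_pos[OF tj_pos] g_pos[of 1] omega_range flip_neq[of x j]
  unfolding sj_def by auto

lemma sj_detailed_balance:
  assumes "k j" and "y = x \<or> y = flip x j"
  shows "\<pi> y * pRN A D k y * sj g \<omega> \<pi> A D j y x * Zj g \<omega> \<pi> A D j y
       = \<pi> x * pRN A D k x * sj g \<omega> \<pi> A D j x y * Zj g \<omega> \<pi> A D j x"
  using assms(2)
proof
  assume y: "y = flip x j"
  define t where "t = tj \<pi> A D j x"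
  have "t > 0"
    unfolding t_def by (rule tj_pos)
  have weight: "\<pi> y * pRN A D k y = \<pi> x * pRN A D k x * t"
    using pRN_flip[of k j A D x, OF assms(1)] pi_pos[of x] pj_pos[of j "x j" True]
    unfolding t_def tj_def y by (simp add: field_simps)
  have "\<pi> y * pRN A D k y * sj g \<omega> \<pi> A D j y x * Zj g \<omega> \<pi> A D j y
      = \<pi> x * pRN A D k x * \<omega> * (t * g (1 / t))"
    using weight Zj_pos[of j y] unfolding sj_def y by (simp add: tj_flip t_def)
  also have "\<dots> = \<pi> x * pRN A D k x * sj g \<omega> \<pi> A D j x y * Zj g \<omega> \<pi> A D j x"
    using g_balancing[OF \<open>t > 0\<close>] Zj_pos[of j x] flip_neq[of x j]
    unfolding sj_def y t_def by simp
  finally show ?thesis .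
qed simp

lemma path_detailed_balance:
  fixes path :: "nat \<Rightarrow> 'n \<Rightarrow> bool" and K :: "nat \<Rightarrow> 'n"
  assumes "\<And>r. 1 \<le> r \<Longrightarrow> r \<le> n \<Longrightarrow>
             k (K r) \<and> (path r = path (r - 1) \<or> path r = flip (path (r - 1)) (K r))"
  shows "\<pi> (path n) * pRN A D k (path n)
           * (\<Prod>r=1..n. sj g \<omega> \<pi> A D (K r) (path r) (path (r - 1)))
           * (\<Prod>r=1..n. Zj g \<omega> \<pi> A D (K r) (path r))
       = \<pi> (path 0) * pRN A D k (path 0)
           * (\<Prod>r=1..n. sj g \<omega> \<pi> A D (K r) (path (r - 1)) (path r))
           * (\<Prod>r=1..n. Zj g \<omega> \<pi> A D (K r) (path (r - 1)))"
proof -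
  let ?W = "\<lambda>x. \<pi> x * pRN A D k x"
  have "?W (path r) * (sj g \<omega> \<pi> A D (K r) (path r) (path (r - 1)) * Zj g \<omega> \<pi> A D (K r) (path r))
      = ?W (path (r - 1)) * (sj g \<omega> \<pi> A D (K r) (path (r - 1)) (path r) * Zj g \<omega> \<pi> A D (K r) (path (r - 1)))"
    if "1 \<le> r" "r \<le> n" for r
    using assms[OF that] sj_detailed_balance[where j="K r" and x="path (r - 1)" and y="path r"]
    by (simp add: mult.assoc)
  then have "?W (path n) * (\<Prod>r=1..n. sj g \<omega> \<pi> A D (K r) (path r) (path (r - 1)) * Zj g \<omega> \<pi> A D (K r) (path r))
      = ?W (path 0) * (\<Prod>r=1..n. sj g \<omega> \<pi> A D (K r) (path (r - 1)) (path r) * Zj g \<omega> \<pi> A D (K r) (path (r - 1)))"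
    by (rule prod_telescope[where w="\<lambda>r. ?W (path r)"])
  then show ?thesis
    by (simp add: prod.distrib ac_simps)
qed

end

theorem proposition3:
  fixes \<pi> :: "('n::finite \<Rightarrow> bool) \<Rightarrow> real"
    and g :: "real \<Rightarrow> real"
    and \<epsilon> \<omega> :: real
    and A D :: "'n \<Rightarrow> real"
    and \<gamma> k :: "'n \<Rightarrow> bool"
    and Ks :: "'n list"
    and path :: "nat \<Rightarrow> ('n \<Rightarrow> bool)"
  assumes pi_pos: "\<And>x. \<pi> x > 0"
    and g_pos: "\<And>t. t > 0 \<Longrightarrow> g t > 0"
    and g_cont: "continuous_on {0<..} g"
    and g_bal: "\<And>t. t > 0 \<Longrightarrow> g t = t * g (1 / t)"
    and eps: "0 < \<epsilon>" "\<epsilon> < 1/2"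
    and A: "\<And>j. \<epsilon> < A j \<and> A j < 1 - \<epsilon>"
    and D: "\<And>j. \<epsilon> < D j \<and> D j < 1 - \<epsilon>"
    and om: "\<epsilon> < \<omega>" "\<omega> < 1 - \<epsilon>"
    and Ks: "distinct Ks" "set Ks = {j. k j}"
    and pk: "length Ks \<ge> 1"
    and path0: "path 0 = \<gamma>"
    and path_step: "\<And>r. 1 \<le> r \<Longrightarrow> r \<le> length Ks \<Longrightarrow>
                      path r = path (r - 1) \<or> path r = flip (path (r - 1)) (Ks ! (r - 1))"
  shows "let pk = length Ks; K = (\<lambda>r. Ks ! (r - 1)); \<gamma>' = path pk;
             q = (\<Prod>r=1..pk. sj g \<omega> \<pi> A D (K r) (path (r - 1)) (path r));
             q' = (\<Prod>r=1..pk. sj g \<omega> \<pi> A D (K (pk - r + 1)) (path (pk - r + 1)) (path (pk - r)));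
             Z = (\<lambda>r. Zj g \<omega> \<pi> A D (K r) (path (r - 1)));
             Z' = (\<lambda>r. Zj g \<omega> \<pi> A D (K (pk - r + 1)) (path (pk - r + 1)));
             ratio = (\<pi> \<gamma>' * pRN A D k \<gamma>' * q') / (\<pi> \<gamma> * pRN A D k \<gamma> * q)
         in ratio = (\<Prod>r=1..pk. Z r / Z' r) \<and> min 1 ratio = min 1 (\<Prod>r=1..pk. Z r / Z' r)"
proof -
  have "0 < A j \<and> A j < 1" "0 < D j \<and> D j < 1" for j
    using A[of j] D[of j] eps by auto
  then interpret parni_kernel \<pi> g \<omega> A D
    using pi_pos g_pos g_bal om eps by unfold_locales (assumption | linarith)+
  define n where "n = length Ks"
  define K where "K = (\<lambda>r. Ks ! (r - 1))"
  define s where "s = (\<lambda>r. sj g \<omega> \<pi> A D (K r) (path (r - 1)) (path r))"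
  define s' where "s' = (\<lambda>r. sj g \<omega> \<pi> A D (K r) (path r) (path (r - 1)))"
  define Z where "Z = (\<lambda>r. Zj g \<omega> \<pi> A D (K r) (path (r - 1)))"
  define Z' where "Z' = (\<lambda>r. Zj g \<omega> \<pi> A D (K r) (path r))"
  define W where "W = (\<lambda>x. \<pi> x * pRN A D k x)"
  have step: "k (K r) \<and> (path r = path (r - 1) \<or> path r = flip (path (r - 1)) (K r))"
    if "1 \<le> r" "r \<le> n" for r
    using that path_step[of r] nth_mem[of "r - 1" Ks] Ks(2) unfolding K_def n_def by auto
  have balance: "W (path n) * prod s' {1..n} * prod Z' {1..n} = W \<gamma> * prod s {1..n} * prod Z {1..n}"
    using path_detailed_balance[where n=n and K=K and path=path and k=k, OF step] path0
    unfolding W_def s_def s'_def Z_def Z'_def by simp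
  have "prod s {1..n} > 0"
    using step sj_pos unfolding s_def by (intro prod_pos) auto
  then have "W \<gamma> * prod s {1..n} > 0"
    unfolding W_def by (simp add: pi_pos pRN_pos)
  moreover have "prod Z' {1..n} > 0"
    unfolding Z'_def by (simp add: Zj_pos prod_pos)
  ultimately have "W (path n) * prod s' {1..n} / (W \<gamma> * prod s {1..n}) = prod Z {1..n} / prod Z' {1..n}"
    by (subst frac_eq_eq) (use balance in \<open>auto simp: ac_simps simp del: prod_zero_iff\<close>)
  then show ?thesis
    using prod_atLeastAtMost_reverse[of Z' n] prod_atLeastAtMost_reverse[of s' n]
    unfolding Let_def n_def[symmetric] K_def[symmetric] W_def s_def s'_def Z_def Z'_def
    by (simp add: prod_dividef)
qed

end
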